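(* Let $C$ be a finite set of coupons with $\delta=|C|$, and let $(p_o)_{o\in C}$ be a probability distribution on $C$. Draw $m\ge 3$ coupons independently, each draw yielding coupon $o$ with probability $p_o$, and let $V$ be the set of distinct coupons obtained. Then \[E(|V|) \leq \min\left\{\frac{m}{\log_2(m)}\cdot H_C+3,\ m,\ \delta\right\},\] where $H_C=\sum_{o\in C} p_o \log_2 \frac{1}{p_o}$ is the entropy of the coupon distribution.
   Context: $E(|V|)$ denotes the expected cardinality of the random set $V$. In the entropy sum, terms with $p_o=0$ are taken to be $0$. *)

theory Defs
  imports "HOL-Probability.Probability"
begin

definition coupon_entropy :: "'a pmf \<Rightarrow> 'a set \<Rightarrow> real" where
  "coupon_entropy p C = (\<Sum>c\<in>C. if pmf p c = 0 then 0 else pmf p c * log 2 (1 / pmf p c))"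

definition draws :: "'a pmf \<Rightarrow> nat \<Rightarrow> (nat \<Rightarrow> 'a) pmf" where
  "draws p m = Pi_pmf {..<m} undefined (\<lambda>_. p)"

definition expected_distinct :: "'a pmf \<Rightarrow> nat \<Rightarrow> real" where
  "expected_distinct p m =
     measure_pmf.expectation (draws p m) (\<lambda>f. real (card (f ` {..<m})))"

end

theory Submission imports Defs begin

text \<open>By linearity, E|V| is the sum over coupons c of the probability 1 - (1 - p_c)^m
that c is drawn. This is at most 1, at most m p_c (Bernoulli), and hence at most
m/log m \<cdot> p_c log(1/p_c) whenever p_c \<le> 1/3: for p_c < 1/m because then log(1/p_c) \<ge> log m,
and for 1/m \<le> p_c \<le> 1/3 because x \<mapsto> ln x / x decreases beyond e.
At most two coupons have p_c > 1/3; each contributes at most 1.\<close>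

lemma image_subset_set_pmf_of_draws:
  assumes "f \<in> set_pmf (draws p m)"
  shows "f ` {..<m} \<subseteq> set_pmf p"
  using assms by (auto simp: draws_def set_Pi_pmf PiE_dflt_def)

lemma finite_set_pmf_draws:
  assumes "finite (set_pmf p)"
  shows "finite (set_pmf (draws p m))"
  using assms by (simp add: draws_def set_Pi_pmf finite_PiE_dflt)

lemma prob_draws_hit:
  "measure_pmf.prob (draws p m) {f. c \<in> f ` {..<m}} = 1 - (1 - pmf p c) ^ m"
proof -
  have miss: "{f. c \<in> f ` {..<m}} = UNIV - Pi {..<m} (\<lambda>_. UNIV - {c})" by auto
  have "measure_pmf.prob (draws p m) (Pi {..<m} (\<lambda>_. UNIV - {c}))
          = (\<Prod>i<m. measure_pmf.prob p (UNIV - {c}))"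
    unfolding draws_def by (rule measure_Pi_pmf_Pi) simp
  also have "measure_pmf.prob p (UNIV - {c}) = 1 - pmf p c"
    using measure_pmf.prob_compl[of "{c}" p] by (simp add: measure_pmf_single)
  finally show ?thesis
    unfolding miss using measure_pmf.prob_compl[of "Pi {..<m} (\<lambda>_. UNIV - {c})" "draws p m"]
    by simp
qed

lemma expected_distinct_eq_sum_hit_prob:
  fixes p :: "'a pmf"
  assumes C: "finite C" and p: "set_pmf p \<subseteq> C"
  shows "expected_distinct p m = (\<Sum>c\<in>C. 1 - (1 - pmf p c) ^ m)"
proof -
  define D where "D = draws p m"
  define hit :: "'a \<Rightarrow> (nat \<Rightarrow> 'a) set" where "hit c = {f. c \<in> f ` {..<m}}" for c
  have card_eq: "real (card (f ` {..<m})) = (\<Sum>c\<in>C. indicator (hit c) f)"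
    if "f \<in> set_pmf D" for f
  proof -
    have "f ` {..<m} \<subseteq> C"
      using image_subset_set_pmf_of_draws[of f p m] that p unfolding D_def by blast
    then have "card (f ` {..<m}) = card {c\<in>C. f \<in> hit c}"
      by (intro arg_cong[where f = card]) (auto simp: hit_def)
    then show ?thesis
      using C by (simp add: indicator_def sum.If_cases Int_def)
  qed
  have "finite (set_pmf D)"
    unfolding D_def using C p by (intro finite_set_pmf_draws) (rule finite_subset)
  then have "expected_distinct p m = (\<Sum>c\<in>C. measure_pmf.expectation D (indicator (hit c)))"
    unfolding expected_distinct_def D_def[symmetric]
    by (subst Bochner_Integration.integral_sum[symmetric])
       (auto intro!: integral_cong_AE integrable_measure_pmf_finite
             simp: AE_measure_pmf_iff card_eq)
  then show ?thesis
    by (simp add: D_def hit_def prob_draws_hit)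
qed

lemma one_minus_power_le_mult:
  fixes q :: real
  assumes "q \<le> 1"
  shows "1 - (1 - q) ^ m \<le> real m * q"
  using Bernoulli_inequality[of "-q" m] assms by simp

lemma entropy_term_nonneg:
  fixes q :: real
  assumes "0 \<le> q" "q \<le> 1"
  shows "0 \<le> q * log 2 (1 / q)"
  using assms by (cases "q = 0") simp_all

lemma one_minus_power_le_entropy_term:
  fixes q :: real
  assumes q: "0 < q" "q \<le> 1/3" and m: "3 \<le> m"
  shows "1 - (1 - q) ^ m \<le> real m / log 2 (real m) * (q * log 2 (1 / q))"
proof -
  have m1: "1 < real m" using m by simp
  have log_m: "0 < log 2 (real m)" using m1 by simp
  show ?thesis
  proof (cases "q < 1 / real m")
    case True
    then have "real m < 1 / q" using q m1 by (simp add: field_simps)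
    then have "log 2 (real m) \<le> log 2 (1 / q)" using m1 q by simp
    then have "real m * q \<le> real m / log 2 (real m) * (q * log 2 (1 / q))"
      using log_m q m1 by (simp add: field_simps)
    then show ?thesis using one_minus_power_le_mult[of q m] q by simp
  next
    case False
    have inv_ge_3: "3 \<le> 1 / q" using q by (simp add: field_simps)
    have "1 / q \<le> real m" using False q m1 by (simp add: field_simps)
    then have "ln (real m) / real m \<le> ln (1 / q) / (1 / q)"
      using ln_x_over_x_mono exp_le inv_ge_3 by (meson order.trans)
    then have "log 2 (real m) \<le> real m * (q * log 2 (1 / q))"
      using m1 q by (simp add: log_def field_simps divide_right_mono)
    then have "1 \<le> real m / log 2 (real m) * (q * log 2 (1 / q))"
      using log_m by (simp add: field_simps)
    moreover have "1 - (1 - q) ^ m \<le> 1" using q by simp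
    ultimately show ?thesis by linarith
  qed
qed

lemma card_pmf_gt_less:
  fixes e :: real
  assumes A: "finite A" and e: "0 < e"
  shows "real (card {x\<in>A. e < pmf p x}) < 1 / e"
proof (cases "{x\<in>A. e < pmf p x} = {}")
  case False
  have "real (card {x\<in>A. e < pmf p x}) * e = (\<Sum>x\<in>{x\<in>A. e < pmf p x}. e)" by simp
  also have "\<dots> < sum (pmf p) {x\<in>A. e < pmf p x}"
    using A False by (intro sum_strict_mono) auto
  also have "\<dots> \<le> 1"
    using A measure_pmf.prob_le_1 by (simp flip: measure_measure_pmf_finite)
  finally show ?thesis using e by (simp add: field_simps)
next
  case True
  show ?thesis by (simp only: True) (simp add: e)
qed

lemma one_minus_power_le_heavy_plus_entropy_term:
  fixes q :: real
  assumes q: "0 \<le> q" "q \<le> 1" and m: "3 \<le> m"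
  shows "1 - (1 - q) ^ m
           \<le> of_bool (1/3 < q) + real m / log 2 (real m) * (if q = 0 then 0 else q * log 2 (1 / q))"
proof -
  have entropy_nonneg: "0 \<le> real m / log 2 (real m) * (if q = 0 then 0 else q * log 2 (1 / q))"
    using entropy_term_nonneg[OF q] m by simp
  show ?thesis
  proof (cases "1/3 < q")
    case True
    have "0 \<le> (1 - q) ^ m" using q by simp
    with entropy_nonneg show ?thesis by (simp only: True of_bool_eq(2))
  next
    case False
    then show ?thesis
      using one_minus_power_le_entropy_term[of q m] q m by (cases "q = 0") auto
  qed
qed

theorem lemma1:
  fixes C :: "'a set" and p :: "'a pmf" and m :: nat
  assumes "finite C"
    and "set_pmf p \<subseteq> C"
    and "m \<ge> 3"
  shows "expected_distinct p m
           \<le> min (real m / log 2 (real m) * coupon_entropy p C + 3) (min (real m) (real (card C)))"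
proof -
  define hit where "hit c = 1 - (1 - pmf p c) ^ m" for c
  define heavy where "heavy = {c\<in>C. 1/3 < pmf p c}"
  have card_heavy: "(\<Sum>c\<in>C. of_bool (1/3 < pmf p c)) = real (card heavy)"
    using assms(1) by (simp add: heavy_def sum.If_cases Int_def)
  have E: "expected_distinct p m = sum hit C"
    unfolding hit_def using assms(1,2) by (rule expected_distinct_eq_sum_hit_prob)
  have by_card: "sum hit C \<le> real (card C)"
    using sum_mono[of C hit "\<lambda>_. 1"] by (simp add: hit_def pmf_le_1)
  have "sum hit C \<le> (\<Sum>c\<in>C. real m * pmf p c)"
    by (intro sum_mono) (simp add: hit_def one_minus_power_le_mult pmf_le_1)
  also have "\<dots> = real m"
    using assms(1,2) by (simp add: sum_distrib_left[symmetric] sum_pmf_eq_1)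
  finally have by_m: "sum hit C \<le> real m" .
  have "sum hit C \<le> (\<Sum>c\<in>C. of_bool (1/3 < pmf p c)
          + real m / log 2 (real m) * (if pmf p c = 0 then 0 else pmf p c * log 2 (1 / pmf p c)))"
    unfolding hit_def using assms(3)
    by (intro sum_mono one_minus_power_le_heavy_plus_entropy_term pmf_nonneg pmf_le_1)
  also have "\<dots> = real (card heavy) + real m / log 2 (real m) * coupon_entropy p C"
    using card_heavy by (simp only: sum.distrib sum_distrib_left coupon_entropy_def)
  finally have
    "sum hit C \<le> real (card heavy) + real m / log 2 (real m) * coupon_entropy p C" .
  moreover have "real (card heavy) < 3"
    using card_pmf_gt_less[OF assms(1), of "1/3" p] by (simp add: heavy_def)
  ultimately show ?thesis
    using E by_card by_m by simp
qed

end
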